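(* Let $w$ be a weight on $\mathbb{R}^n$, let $\varphi$ be as in the context, and let $1\le q<p<\infty$. Then $A(\mathcal M^{q}(\varphi))\subset A(\mathcal M^{p}(\varphi))$; that is, if $[w]_{A(\mathcal M^{q}(\varphi))}<\infty$ then $[w]_{A(\mathcal M^{p}(\varphi))}<\infty$.
   Context: A weight is a nonnegative locally integrable function on $\mathbb{R}^n$. Let $\varphi$ be a function from the set of Euclidean balls of $\mathbb{R}^n$ to $(0,\infty)$; standing assumptions: $\varphi$ is doubling ($\varphi(2B)\le C\varphi(B)$ for all balls $B$) and reverse doubling (there are $\delta>0$, $C>0$ with $\varphi(B_1)/\varphi(B_2)\le C(|B_1|/|B_2|)^\delta$ whenever $B_1\subset B_2$ are balls), and characteristic functions of balls belong to the Morrey spaces considered. For $1\le p<\infty$, $\mathcal M^{p}(\varphi,w)$ is the space of measurable $f$ with $\|f\|_{\mathcal M^{p}(\varphi,w)}:=\sup_B\big(\varphi(B)^{-1}\int_B|f|^pw\big)^{1/p}<\infty$, the supremum over all balls. For a Banach lattice $X$ of measurable functions, its Köthe dual $X'$ consists of measurable $g$ with $\|g\|_{X'}:=\sup\{\int_{\mathbb{R}^n}|fg|: \|f\|_X\le 1\}<\infty$. Define $[w]_{A(\mathcal M^{p}(\varphi))}:=\sup_B \|\chi_B\|_{\mathcal M^{p}(\varphi,w)}\|\chi_B\|_{\mathcal M^{p}(\varphi,w)'}/|B|$ (supremum over all balls $B$), and $A(\mathcal M^{p}(\varphi))$ is the class of weights with this quantity finite. *)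

theory Defs
  imports "HOL-Analysis.Analysis"
begin

definition balls :: "'a::euclidean_space set set" where
  "balls = {ball x r | x r. r > 0}"

definition is_weight :: "('a::euclidean_space \<Rightarrow> real) \<Rightarrow> bool" where
  "is_weight w \<longleftrightarrow> w \<in> borel_measurable lebesgue \<and> (\<forall>x. 0 \<le> w x) \<and>
     (\<forall>K. compact K \<longrightarrow> set_integrable lebesgue K w)"

definition admissible_phi :: "('a::euclidean_space set \<Rightarrow> real) \<Rightarrow> bool" where
  "admissible_phi \<phi> \<longleftrightarrow>
     (\<forall>B\<in>balls. 0 < \<phi> B) \<and>
     (\<exists>C. \<forall>x r. 0 < r \<longrightarrow> \<phi> (ball x (2 * r)) \<le> C * \<phi> (ball x r)) \<and>
     (\<exists>\<delta> C. 0 < \<delta> \<and> 0 < C \<and> (\<forall>B1\<in>balls. \<forall>B2\<in>balls. B1 \<subseteq> B2 \<longrightarrow>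
        \<phi> B1 / \<phi> B2 \<le> C * (measure lborel B1 / measure lborel B2) powr \<delta>))"

definition enn_root :: "real \<Rightarrow> ennreal \<Rightarrow> ennreal" where
  "enn_root p t = (if t = \<infinity> then \<infinity> else ennreal (enn2real t powr (1 / p)))"

definition morrey_norm :: "real \<Rightarrow> ('a::euclidean_space set \<Rightarrow> real) \<Rightarrow> ('a \<Rightarrow> real) \<Rightarrow> ('a \<Rightarrow> real) \<Rightarrow> ennreal" where
  "morrey_norm p \<phi> w f = enn_root p
     (SUP B\<in>balls. (\<integral>\<^sup>+x\<in>B. ennreal (\<bar>f x\<bar> powr p * w x) \<partial>lebesgue) / ennreal (\<phi> B))"

definition kothe_norm :: "(('a::euclidean_space \<Rightarrow> real) \<Rightarrow> ennreal) \<Rightarrow> ('a \<Rightarrow> real) \<Rightarrow> ennreal" where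
  "kothe_norm X g = (SUP f\<in>{f \<in> borel_measurable lebesgue. X f \<le> 1}.
      \<integral>\<^sup>+x. ennreal \<bar>f x * g x\<bar> \<partial>lebesgue)"

definition A_const :: "real \<Rightarrow> ('a::euclidean_space set \<Rightarrow> real) \<Rightarrow> ('a \<Rightarrow> real) \<Rightarrow> ennreal" where
  "A_const p \<phi> w = (SUP B\<in>balls.
      morrey_norm p \<phi> w (indicator B) * kothe_norm (morrey_norm p \<phi> w) (indicator B)
        / emeasure lborel B)"

end

theory Submission imports Defs begin

text \<open>For a ball B the Morrey norm of its indicator is S^(1/p), where
  S = sup over balls B' of \<phi>(B')^(-1) \<integral> over B' \<inter> B of w does not depend on p.
  If ||f||_(M^p) \<le> 1, then g = |f|^(p/q) \<chi>_B has ||g||_(M^q) \<le> 1, so the integral of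
  |f|^(p/q) over B is at most the Koethe dual norm k of \<chi>_B in M^q; Hoelder's inequality
  on B then bounds the dual norm of \<chi>_B in M^p by k^(q/p) |B|^(1 - q/p). Multiplying out,
  the quantity of B for p is at most the one for q raised to the power q/p, whence
  [w]_p \<le> [w]_q^(q/p).\<close>

lemma weighted_AM_GM_powr:
  fixes r k m t :: real
  assumes r: "0 < r" "r < 1" and k: "0 < k" and m: "0 < m" and t: "0 \<le> t"
  shows "t \<le> (r * t powr (1/r) / k + (1 - r) / m) * (k powr r * m powr (1 - r))"
proof (cases "t = 0")
  case True
  then show ?thesis using r k m by simp
next
  case False
  then have "0 < t" using t by simp
  have "(t powr (1/r) / k) powr r * (1 / m) powr (1 - r) \<le> r * (t powr (1/r) / k) + (1 - r) * (1 / m)"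
    by (rule Youngs_inequality_0) (use r k m \<open>0 < t\<close> in auto)
  moreover have "(t powr (1/r) / k) powr r * (1 / m) powr (1 - r) = t / (k powr r * m powr (1 - r))"
    using r k m \<open>0 < t\<close> by (simp add: powr_divide powr_powr)
  ultimately show ?thesis
    using k m by (simp add: divide_le_eq mult.commute)
qed

lemma nn_set_integral_abs_le_Holder:
  fixes f :: "'a \<Rightarrow> real"
  assumes f: "f \<in> borel_measurable M" and B: "B \<in> sets M"
    and r: "0 < r" "r < 1"
    and m: "emeasure M B = ennreal m" "0 < m"
    and k: "(\<integral>\<^sup>+x\<in>B. ennreal (\<bar>f x\<bar> powr (1/r)) \<partial>M) \<le> ennreal k" "0 \<le> k"
  shows "(\<integral>\<^sup>+x\<in>B. ennreal \<bar>f x\<bar> \<partial>M) \<le> ennreal (k powr r * m powr (1 - r))"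
proof (cases "k = 0")
  case True
  then have "(\<integral>\<^sup>+x. ennreal (\<bar>f x\<bar> powr (1/r)) * indicator B x \<partial>M) = 0"
    using k by simp
  then have "AE x in M. ennreal (\<bar>f x\<bar> powr (1/r)) * indicator B x = 0"
    using f B by (subst (asm) nn_integral_0_iff_AE) auto
  then have "AE x in M. ennreal \<bar>f x\<bar> * indicator B x = 0"
    by eventually_elim (auto split: split_indicator)
  then have "(\<integral>\<^sup>+x\<in>B. ennreal \<bar>f x\<bar> \<partial>M) = 0"
    using f B by (subst nn_integral_0_iff_AE) auto
  then show ?thesis by simp
next
  case False
  then have "0 < k" using k by simp
  define C where "C = k powr r * m powr (1 - r)"
  have "C > 0" using \<open>0 < k\<close> m by (simp add: C_def)
  have "(\<integral>\<^sup>+x\<in>B. ennreal \<bar>f x\<bar> \<partial>M)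
      \<le> (\<integral>\<^sup>+x\<in>B. ennreal (C * r / k) * ennreal (\<bar>f x\<bar> powr (1/r)) + ennreal (C * (1 - r) / m) \<partial>M)"
  proof (intro nn_integral_mono mult_right_mono)
    fix x
    have "\<bar>f x\<bar> \<le> C * r / k * \<bar>f x\<bar> powr (1/r) + C * (1 - r) / m"
      using weighted_AM_GM_powr[OF r \<open>0 < k\<close> m(2), of "\<bar>f x\<bar>"]
      by (simp add: C_def algebra_simps)
    then show "ennreal \<bar>f x\<bar> \<le> ennreal (C * r / k) * ennreal (\<bar>f x\<bar> powr (1/r)) + ennreal (C * (1 - r) / m)"
      using r m \<open>0 < k\<close> \<open>C > 0\<close> by (simp flip: ennreal_mult ennreal_plus)
  qed simp
  also have "\<dots> = ennreal (C * r / k) * (\<integral>\<^sup>+x\<in>B. ennreal (\<bar>f x\<bar> powr (1/r)) \<partial>M)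
      + ennreal (C * (1 - r) / m) * emeasure M B"
    using f B by (simp add: distrib_right nn_integral_add nn_integral_cmult mult.assoc)
  also have "\<dots> \<le> ennreal (C * r / k) * ennreal k + ennreal (C * (1 - r) / m) * ennreal m"
    using k m by (intro add_mono mult_left_mono) auto
  also have "\<dots> = ennreal (C * r / k * k + C * (1 - r) / m * m)"
    using r m \<open>0 < k\<close> \<open>C > 0\<close> by (simp flip: ennreal_mult ennreal_plus)
  also have "C * r / k * k + C * (1 - r) / m * m = C"
    using m \<open>0 < k\<close> by (simp add: field_simps)
  finally show ?thesis by (simp add: C_def)
qed

definition morrey_modular :: "real \<Rightarrow> ('a::euclidean_space set \<Rightarrow> real) \<Rightarrow> ('a \<Rightarrow> real) \<Rightarrow> ('a \<Rightarrow> real) \<Rightarrow> ennreal" where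
  "morrey_modular p \<phi> w f =
     (SUP B\<in>balls. (\<integral>\<^sup>+x\<in>B. ennreal (\<bar>f x\<bar> powr p * w x) \<partial>lebesgue) / ennreal (\<phi> B))"

lemma morrey_norm_eq_enn_root: "morrey_norm p \<phi> w f = enn_root p (morrey_modular p \<phi> w f)"
  by (simp add: morrey_norm_def morrey_modular_def)

lemma enn_root_le_1_iff:
  assumes "0 < p"
  shows "enn_root p t \<le> 1 \<longleftrightarrow> t \<le> 1"
proof (cases t)
  case (real x)
  have "x powr (1/p) \<le> 1 \<longleftrightarrow> x \<le> 1" if "0 \<le> x"
    using that assms gr_one_powr[of x "1/p"] powr_mono2[of "1/p" x 1] by (auto simp: not_le[symmetric])
  then show ?thesis using real by (simp add: enn_root_def ennreal_le_1)
qed (simp add: enn_root_def)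

lemma morrey_norm_le_1_iff: "0 < p \<Longrightarrow> morrey_norm p \<phi> w f \<le> 1 \<longleftrightarrow> morrey_modular p \<phi> w f \<le> 1"
  by (simp add: morrey_norm_eq_enn_root enn_root_le_1_iff)

lemma morrey_modular_mono:
  assumes "\<forall>x. 0 \<le> w x" "0 \<le> p" "\<And>x. \<bar>g x\<bar> \<le> \<bar>f x\<bar>"
  shows "morrey_modular p \<phi> w g \<le> morrey_modular p \<phi> w f"
  unfolding morrey_modular_def
  using assms by (intro SUP_mono' divide_right_mono_ennreal nn_integral_mono mult_right_mono
      ennreal_leI powr_mono2) auto

lemma morrey_modular_abs_powr:
  assumes "0 < q"
  shows "morrey_modular q \<phi> w (\<lambda>x. \<bar>f x\<bar> powr (p / q)) = morrey_modular p \<phi> w f"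
  using assms by (simp add: morrey_modular_def powr_powr)

lemma morrey_norm_indicator:
  assumes "0 < p"
  shows "morrey_norm p \<phi> w (indicator B) = enn_root p (morrey_modular 1 \<phi> w (indicator B))"
proof -
  have "\<bar>indicator B x :: real\<bar> powr p = \<bar>indicator B x\<bar> powr 1" for x
    using assms by (simp split: split_indicator)
  then show ?thesis by (simp add: morrey_norm_eq_enn_root morrey_modular_def)
qed

lemma kothe_norm_morrey_indicator_le:
  fixes w :: "'a::euclidean_space \<Rightarrow> real"
  assumes w: "\<forall>x. 0 \<le> w x" and q: "0 < q" "q < p" and B: "B \<in> sets lebesgue"
    and m: "emeasure lebesgue B = ennreal m" "0 < m"
    and k: "kothe_norm (morrey_norm q \<phi> w) (indicator B) \<le> ennreal k" "0 \<le> k"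
  shows "kothe_norm (morrey_norm p \<phi> w) (indicator B) \<le> ennreal (k powr (q/p) * m powr (1 - q/p))"
  unfolding kothe_norm_def[of "morrey_norm p \<phi> w"]
proof (intro SUP_least, clarify)
  fix f :: "'a \<Rightarrow> real"
  assume f: "f \<in> borel_measurable lebesgue" "morrey_norm p \<phi> w f \<le> 1"
  define g where "g x = \<bar>f x\<bar> powr (p/q) * indicator B x" for x
  have "morrey_modular q \<phi> w g \<le> morrey_modular q \<phi> w (\<lambda>x. \<bar>f x\<bar> powr (p/q))"
    using w q by (intro morrey_modular_mono) (auto simp: g_def split: split_indicator)
  also have "\<dots> = morrey_modular p \<phi> w f"
    using q(1) by (rule morrey_modular_abs_powr)
  also have "\<dots> \<le> 1"
    using f q by (simp add: morrey_norm_le_1_iff)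
  finally have "morrey_norm q \<phi> w g \<le> 1"
    using q by (simp add: morrey_norm_le_1_iff)
  then have "(\<integral>\<^sup>+x. ennreal \<bar>g x * indicator B x\<bar> \<partial>lebesgue) \<le> kothe_norm (morrey_norm q \<phi> w) (indicator B)"
    unfolding kothe_norm_def using f B by (intro SUP_upper) (simp add: g_def[abs_def])
  also have "\<dots> \<le> ennreal k"
    by (rule k(1))
  finally have "(\<integral>\<^sup>+x. ennreal \<bar>g x * indicator B x\<bar> \<partial>lebesgue) \<le> ennreal k" .
  moreover have "ennreal \<bar>g x * indicator B x\<bar> = ennreal (\<bar>f x\<bar> powr (1 / (q/p))) * indicator B x" for x
    by (simp add: g_def split: split_indicator)
  ultimately have "(\<integral>\<^sup>+x\<in>B. ennreal (\<bar>f x\<bar> powr (1 / (q/p))) \<partial>lebesgue) \<le> ennreal k"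
    by simp
  from nn_set_integral_abs_le_Holder[OF f(1) B _ _ m this k(2)] q
  show "(\<integral>\<^sup>+x. ennreal \<bar>f x * indicator B x\<bar> \<partial>lebesgue) \<le> ennreal (k powr (q/p) * m powr (1 - q/p))"
    by (simp add: abs_mult indicator_mult_ennreal mult.commute)
qed

definition A_ball_term :: "real \<Rightarrow> ('a::euclidean_space set \<Rightarrow> real) \<Rightarrow> ('a \<Rightarrow> real) \<Rightarrow> 'a set \<Rightarrow> ennreal" where
  "A_ball_term p \<phi> w B =
     morrey_norm p \<phi> w (indicator B) * kothe_norm (morrey_norm p \<phi> w) (indicator B) / emeasure lborel B"

lemma A_const_eq_SUP_A_ball_term: "A_const p \<phi> w = (SUP B\<in>balls. A_ball_term p \<phi> w B)"
  by (simp add: A_const_def A_ball_term_def)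

lemma A_ball_term_le_powr:
  fixes w :: "'a::euclidean_space \<Rightarrow> real"
  assumes w: "\<forall>x. 0 \<le> w x" and q: "0 < q" "q < p" and B: "B \<in> balls"
    and finite: "morrey_norm q \<phi> w (indicator B) < \<infinity>"
    and a: "A_ball_term q \<phi> w B \<le> ennreal a" "0 \<le> a"
  shows "A_ball_term p \<phi> w B \<le> ennreal (a powr (q/p))"
proof -
  from B obtain c \<rho> where ball: "B = ball c \<rho>" "0 < \<rho>"
    by (auto simp: balls_def)
  define m where "m = measure lborel B"
  have "0 < m"
    using ball by (simp add: m_def)
  have m: "emeasure lborel B = ennreal m"
    using ball emeasure_lborel_ball_finite[of c \<rho>] by (simp add: m_def emeasure_eq_ennreal_measure)
  obtain s where s: "morrey_modular 1 \<phi> w (indicator B) = ennreal s" "0 \<le> s"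
    using finite q by (cases "morrey_modular 1 \<phi> w (indicator B)") (auto simp: morrey_norm_indicator enn_root_def)
  have norm: "morrey_norm t \<phi> w (indicator B) = ennreal (s powr (1/t))" if "0 < t" for t
    using that s by (simp add: morrey_norm_indicator enn_root_def)
  show ?thesis
  proof (cases "s = 0")
    case True
    then show ?thesis
      using q by (simp add: A_ball_term_def norm)
  next
    case False
    then have "0 < s" using s by simp
    have "0 < p" using q by simp
    obtain k where k: "kothe_norm (morrey_norm q \<phi> w) (indicator B) = ennreal k" "0 \<le> k"
    proof (cases "kothe_norm (morrey_norm q \<phi> w) (indicator B)")
      case top
      then have "A_ball_term q \<phi> w B = \<infinity>"
        using \<open>0 < s\<close> q m by (simp add: A_ball_term_def norm ennreal_mult_eq_top_iff ennreal_divide_eq_top_iff)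
      then show ?thesis using a by (simp add: top_unique)
    qed
    have "s powr (1/q) * k / m \<le> a"
      using a \<open>0 < m\<close> k by (simp add: A_ball_term_def norm[OF q(1)] m divide_ennreal flip: ennreal_mult)
    have "A_ball_term p \<phi> w B \<le> ennreal (s powr (1/p)) * ennreal (k powr (q/p) * m powr (1 - q/p)) / ennreal m"
      unfolding A_ball_term_def norm[OF \<open>0 < p\<close>] m
      using kothe_norm_morrey_indicator_le[OF w q _ _ \<open>0 < m\<close> _ k(2)] ball k m
      by (intro divide_right_mono_ennreal mult_left_mono) auto
    also have "\<dots> = ennreal ((s powr (1/q) * k / m) powr (q/p))"
    proof -
      have "s powr (1/p) * (k powr (q/p) * m powr (1 - q/p)) / m = (s powr (1/q) * k / m) powr (q/p)"
        using q \<open>0 < m\<close> k s by (simp add: powr_mult powr_divide powr_powr powr_diff)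
      then show ?thesis
        using \<open>0 < m\<close> by (simp add: divide_ennreal flip: ennreal_mult)
    qed
    also have "\<dots> \<le> ennreal (a powr (q/p))"
      using \<open>s powr (1/q) * k / m \<le> a\<close> q k \<open>0 < m\<close> by (intro ennreal_leI powr_mono2) auto
    finally show ?thesis .
  qed
qed

theorem proposition2p3:
  fixes w :: "'a::euclidean_space \<Rightarrow> real"
    and \<phi> :: "'a set \<Rightarrow> real"
    and p q :: real
  assumes "is_weight w"
    and "admissible_phi \<phi>"
    and "1 \<le> q" and "q < p"
    and "\<forall>B\<in>balls. morrey_norm q \<phi> w (indicator B) < \<infinity>"
    and "\<forall>B\<in>balls. morrey_norm p \<phi> w (indicator B) < \<infinity>"
    and "A_const q \<phi> w < \<infinity>"
  shows "A_const p \<phi> w < \<infinity>"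
proof -
  have w: "\<forall>x. 0 \<le> w x"
    using \<open>is_weight w\<close> by (simp add: is_weight_def)
  obtain a where a: "A_const q \<phi> w = ennreal a" "0 \<le> a"
    using \<open>A_const q \<phi> w < \<infinity>\<close> by (cases "A_const q \<phi> w") auto
  have "A_ball_term p \<phi> w B \<le> ennreal (a powr (q/p))" if "B \<in> balls" for B
  proof (rule A_ball_term_le_powr[OF w _ \<open>q < p\<close> that _ _ \<open>0 \<le> a\<close>])
    show "0 < q"
      using \<open>1 \<le> q\<close> by simp
    show "morrey_norm q \<phi> w (indicator B) < \<infinity>"
      using assms(5) that by blast
    show "A_ball_term q \<phi> w B \<le> ennreal a"
      unfolding a(1)[symmetric] A_const_eq_SUP_A_ball_term using that by (rule SUP_upper)
  qed
  then have "A_const p \<phi> w \<le> ennreal (a powr (q/p))"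
    unfolding A_const_eq_SUP_A_ball_term by (rule SUP_least)
  then show ?thesis
    by (rule le_less_trans) simp
qed

end
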